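(* Let $r_+,r_-\in\mathcal{R}$ with $r_+\subseteq r_-$, let $p\in\{+,-\}$, let $R$ be a relational type with $X\in^p R$, and let $\gamma$ be an environment defined on the free type variables of $R$ other than $X$. Then $\llbracket R\rrbracket_{\gamma[X\mapsto r_p]}\subseteq\llbracket R\rrbracket_{\gamma[X\mapsto r_{\bar p}]}$.
   Context: Terms are those of the pure untyped $\lambda$-calculus, up to $\alpha$-equivalence; $=_{\beta\eta}$ is $\beta\eta$-convertibility. Relational types: $R ::= X \mid R\to R' \mid \forall X.R \mid R^{\cup} \mid R\cdot R' \mid t$ (last form: promotion of a term). A relation on terms is $\beta\eta$-closed if closed under replacing either related term by a $\beta\eta$-equal one; $\mathcal{R}$ is the set of such relations; environments $\gamma$ map finitely many type variables to $\mathcal{R}$. Interpretation: $\llbracket X\rrbracket_\gamma=\gamma(X)$; $t\,\llbracket R\to R'\rrbracket_\gamma\,t'$ iff for all $a,a'$ with $a\,\llbracket R\rrbracket_\gamma\,a'$, $t\,a\,\llbracket R'\rrbracket_\gamma\,t'\,a'$; $\llbracket \forall X.R\rrbracket_\gamma=\bigcap_{r\in\mathcal{R}}\llbracket R\rrbracket_{\gamma[X\mapsto r]}$; $t\,\llbracket R^\cup\rrbracket_\gamma\,t'$ iff $t'\,\llbracket R\rrbracket_\gamma\,t$; $t\,\llbracket R\cdot R'\rrbracket_\gamma\,t'$ iff $\exists t''$, $t\,\llbracket R\rrbracket_\gamma\,t''$ and $t''\,\llbracket R'\rrbracket_\gamma\,t'$; $\llbracket \hat t\rrbracket_\gamma=\{(t,t')\mid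 \hat t\,t=_{\beta\eta}t'\}$. Polarities $p\in\{+,-\}$, $\bar p$ the other. $X\in^pR$ is defined inductively: $X\in^+X$; $X\in^pY$ for type variables $Y\ne X$; $X\in^p(R\to R')$ iff $X\in^{\bar p}R$ and $X\in^pR'$; $X\in^p\forall Y.R$ iff $X\in^pR$ (with $Y\ne X$); $X\in^p(R\cdot R')$ iff $X\in^pR$ and $X\in^pR'$; $X\in^pR^\cup$ iff $X\in^pR$; $X\in^p t$ for every promoted term $t$. *)

theory Defs
  imports Main
begin

section \<open>Untyped lambda terms (de Bruijn indices, so alpha-equivalence is syntactic equality)\<close>

datatype dbterm = Var nat | App dbterm dbterm | Abs dbterm

primrec lift :: "dbterm \<Rightarrow> nat \<Rightarrow> dbterm" where
  "lift (Var i) k = (if i < k then Var i else Var (Suc i))"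
| "lift (App s t) k = App (lift s k) (lift t k)"
| "lift (Abs s) k = Abs (lift s (Suc k))"

primrec subst :: "dbterm \<Rightarrow> dbterm \<Rightarrow> nat \<Rightarrow> dbterm" where
  "subst (Var i) s k = (if k < i then Var (i - 1) else if i = k then s else Var i)"
| "subst (App t u) s k = App (subst t s k) (subst u s k)"
| "subst (Abs t) s k = Abs (subst t (lift s 0) (Suc k))"

inductive bestep :: "dbterm \<Rightarrow> dbterm \<Rightarrow> bool" where
  beta: "bestep (App (Abs s) t) (subst s t 0)"
| eta: "bestep (Abs (App (lift s 0) (Var 0))) s"
| appL: "bestep s t \<Longrightarrow> bestep (App s u) (App t u)"
| appR: "bestep s t \<Longrightarrow> bestep (App u s) (App u t)"
| abs: "bestep s t \<Longrightarrow> bestep (Abs s) (Abs t)"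

definition beq :: "dbterm \<Rightarrow> dbterm \<Rightarrow> bool" where
  "beq = equivclp bestep"

type_synonym trel = "(dbterm \<times> dbterm) set"

definition be_closed :: "trel \<Rightarrow> bool" where
  "be_closed r \<longleftrightarrow> (\<forall>t t' u u'. (t, t') \<in> r \<and> beq t u \<and> beq t' u' \<longrightarrow> (u, u') \<in> r)"

definition RR :: "trel set" where
  "RR = {r. be_closed r}"

type_synonym tvar = nat

datatype rtype =
    TV tvar
  | Arr rtype rtype
  | All tvar rtype
  | Conv rtype
  | Comp rtype rtype
  | Prom dbterm

primrec fvs :: "rtype \<Rightarrow> tvar set" where
  "fvs (TV X) = {X}"
| "fvs (Arr R R') = fvs R \<union> fvs R'"
| "fvs (All X R) = fvs R - {X}"
| "fvs (Conv R) = fvs R"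
| "fvs (Comp R R') = fvs R \<union> fvs R'"
| "fvs (Prom t) = {}"

type_synonym env = "tvar \<rightharpoonup> trel"

text \<open>Interpretation; an unbound variable (never relevant under the hypotheses) denotes the empty relation.\<close>
primrec interp :: "env \<Rightarrow> rtype \<Rightarrow> trel" where
  "interp \<gamma> (TV X) = (case \<gamma> X of Some r \<Rightarrow> r | None \<Rightarrow> {})"
| "interp \<gamma> (Arr R R') =
     {(t, t'). \<forall>a a'. (a, a') \<in> interp \<gamma> R \<longrightarrow> (App t a, App t' a') \<in> interp \<gamma> R'}"
| "interp \<gamma> (All X R) = (\<Inter>r\<in>RR. interp (\<gamma>(X \<mapsto> r)) R)"
| "interp \<gamma> (Conv R) = {(t, t'). (t', t) \<in> interp \<gamma> R}"
| "interp \<gamma> (Comp R R') = interp \<gamma> R O interp \<gamma> R'"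
| "interp \<gamma> (Prom s) = {(t, t'). beq (App s t) t'}"

datatype pol = Pos | Neg

primrec flip :: "pol \<Rightarrow> pol" where
  "flip Pos = Neg" | "flip Neg = Pos"

primrec sel :: "pol \<Rightarrow> trel \<Rightarrow> trel \<Rightarrow> trel" where
  "sel Pos rp rm = rp" | "sel Neg rp rm = rm"

text \<open>X occurs in R with polarity p.  The rule occ_AllSame accounts for alpha-equivalence:
  \<forall>X.R is alpha-equal to \<forall>Z.R' with X not occurring, where X occurs with every polarity.\<close>
inductive occ :: "tvar \<Rightarrow> pol \<Rightarrow> rtype \<Rightarrow> bool" where
  occ_Self: "occ X Pos (TV X)"
| occ_Other: "Y \<noteq> X \<Longrightarrow> occ X p (TV Y)"
| occ_Arr: "occ X (flip p) R \<Longrightarrow> occ X p R' \<Longrightarrow> occ X p (Arr R R')"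
| occ_All: "Y \<noteq> X \<Longrightarrow> occ X p R \<Longrightarrow> occ X p (All Y R)"
| occ_AllSame: "occ X p (All X R)"
| occ_Comp: "occ X p R \<Longrightarrow> occ X p R' \<Longrightarrow> occ X p (Comp R R')"
| occ_Conv: "occ X p R \<Longrightarrow> occ X p (Conv R)"
| occ_Prom: "occ X p (Prom t)"

end

theory Submission
  imports Defs
begin

(* The arrow is
   antitone in its domain and monotone in its codomain, which is exactly why
   the polarity of X flips on the left of an arrow; every other former is
   monotone in its arguments.  Under a binder Y the updates of X and Y commute
   because Y differs from X, and under a binder X the value of X is
   irrelevant. *)

lemma flip_flip [simp]: "flip (flip p) = p"
  by (cases p) simp_all

lemma interp_Arr_mono:
  assumes "interp \<gamma>' R \<subseteq> interp \<gamma> R" and "interp \<gamma> R' \<subseteq> interp \<gamma>' R'"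
  shows "interp \<gamma> (Arr R R') \<subseteq> interp \<gamma>' (Arr R R')"
  using assms by auto

lemma interp_All_mono:
  assumes "\<And>r. r \<in> RR \<Longrightarrow> interp (\<gamma>(Y \<mapsto> r)) R \<subseteq> interp (\<gamma>'(Y \<mapsto> r)) R"
  shows "interp \<gamma> (All Y R) \<subseteq> interp \<gamma>' (All Y R)"
  using assms by auto

lemma interp_All_upd_bound:
  "interp (\<gamma>(X \<mapsto> r)) (All X R) = interp \<gamma> (All X R)"
  by simp

lemma interp_mono_occ:
  assumes "rp \<subseteq> rm" and "occ X p R"
  shows "interp (\<gamma>(X \<mapsto> sel p rp rm)) R \<subseteq> interp (\<gamma>(X \<mapsto> sel (flip p) rp rm)) R"
  using assms(2)
proof (induction arbitrary: \<gamma> rule: occ.induct)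
  case occ_Self
  then show ?case using assms(1) by simp
next
  case (occ_Arr X p R R')
  show ?case
    using occ_Arr.IH(1)[of \<gamma>] occ_Arr.IH(2)[of \<gamma>]
    by (intro interp_Arr_mono) simp_all
next
  case (occ_All Y X p R)
  show ?case
  proof (rule interp_All_mono)
    fix r
    show "interp (\<gamma>(X \<mapsto> sel p rp rm, Y \<mapsto> r)) R \<subseteq> interp (\<gamma>(X \<mapsto> sel (flip p) rp rm, Y \<mapsto> r)) R"
      using occ_All.IH[of "\<gamma>(Y \<mapsto> r)"] by (simp only: fun_upd_twist[OF \<open>Y \<noteq> X\<close> [symmetric]])
  qed
next
  case occ_AllSame
  show ?case by (simp only: interp_All_upd_bound)
qed (auto simp: relcomp_mono)

(* Only the inclusion and the polarity hypothesis are needed: the remaining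
   hypotheses are the well-formedness conditions of the paper's setting. *)
theorem mainTheorem9:
  fixes rp rm :: trel and p :: pol and R :: rtype and X :: tvar and \<gamma> :: env
  assumes "rp \<in> RR" and "rm \<in> RR" and "rp \<subseteq> rm"
    and "occ X p R"
    and "finite (dom \<gamma>)" and "ran \<gamma> \<subseteq> RR"
    and "fvs R - {X} \<subseteq> dom \<gamma>"
  shows "interp (\<gamma>(X \<mapsto> sel p rp rm)) R \<subseteq> interp (\<gamma>(X \<mapsto> sel (flip p) rp rm)) R"
  using interp_mono_occ[OF \<open>rp \<subseteq> rm\<close> \<open>occ X p R\<close>] .

end
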